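(* Let $D$ be a series-parallel digraph with a fixed binary decomposition tree, and let $\boldsymbol{P}^*$ be an optimal path profile for \textsc{Min-Max Disjoint Paths} on $D$ with $k$ paths. Let $\ast\in\{\circ,\parallel\}$ and let $D'=D^{(1)}\ast D^{(2)}\sqsubseteq D$, where $D^{(1)},D^{(2)}$ are the graphs of the two children of the tree vertex of $D'$. If $\boldsymbol{Q}$ is a path profile in $D^{(1)}$ and $\boldsymbol{R}$ is a path profile in $D^{(2)}$ that are both consistent with $\boldsymbol{P}^*$ and balanced (in $D^{(1)}$, resp. $D^{(2)}$), then their greedy composition $\boldsymbol{P}=\boldsymbol{Q}\ast\boldsymbol{R}$ is a path profile in $D'$ that is consistent with $\boldsymbol{P}^*$ and balanced in $D'$.
   Context: A series-parallel digraph is a single arc, a series composition $D'\circ D''$ (sink of $D'$ identified with source of $D''$) or a parallel composition $D'\parallel D''$ (sources identified, sinks identified) of series-parallel digraphs; a binary decomposition tree has leaves = arcs and internal vertices labeled $S$/$P$ representing series/parallel composition of their children's graphs. $D'\sqsubseteq D$ denotes the subgraph represented by some vertex of the fixed tree, with source $s'$ and sink $t'$. \textsc{Min-Max Disjoint Paths} on $D$ with travel times $\tau\ge0$: find $k$ pairwise arc-disjoint $s$-$t$-paths minimizing the maximum length. A path profile in $D'$ is a tuple of pairwise arc-disjoint $s'$-$t'$-paths in $D'$; for an $s$-$t$-path $P$ of $D$ using an arc of $D'$, $P\cap A(D')$ is an $s'$-$t'$-path. Notation: $\tau(P,D')=\sum_{a\in P\cap A(D')}\tau_a$, $C_{\max}(\boldsymbol{P},D')=\max_{P\in\boldsymbol{P}}\tau(P,D')$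 (with $0$ for an empty profile), $\theta(\boldsymbol{P},D')=\sum_{P\in\boldsymbol{P}}\tau(P,D')$. A profile $\boldsymbol{P}$ is consistent with $\boldsymbol{P}^*$ in $D'$ if $\boldsymbol{P}$ and $\boldsymbol{P}^*$ use the same number of paths in $D'$ and $\theta(\boldsymbol{P},D')\le\theta(\boldsymbol{P}^*,D')$. If $k'$ paths of $\boldsymbol{P}$ traverse $D'$ with lengths (in $D'$) $p_1\ge\dots\ge p_{k'}$, then $\boldsymbol{P}$ is balanced in $D'$ if $\frac1i\sum_{j=1}^ip_j-p_{i+1}\le C_{\max}(\boldsymbol{P}^*,D')$ for all $i\in[k'-1]$. Greedy composition: for series composition with $\boldsymbol{Q},\boldsymbol{R}$ having the same number of paths, concatenate the longest path of $\boldsymbol{Q}$ with the shortest of $\boldsymbol{R}$, the second-longest with the second-shortest, and so on (ties broken arbitrarily); for parallel composition, take the union of the paths of $\boldsymbol{Q}$ and $\boldsymbol{R}$. *)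

theory Defs
  imports Complex_Main "HOL-Library.Multiset"
begin

text \<open>The digraph is represented through its decomposition tree: the source and sink
  of each subgraph are implicit in the structure.\<close>

datatype sptype = S | P

datatype 'a sptree = Arc 'a | Node sptype "'a sptree" "'a sptree"

fun arcs :: "'a sptree \<Rightarrow> 'a list" where
  "arcs (Arc a) = [a]"
| "arcs (Node c T1 T2) = arcs T1 @ arcs T2"

definition wf_tree :: "'a sptree \<Rightarrow> bool" where
  "wf_tree T \<longleftrightarrow> distinct (arcs T)"

text \<open>Subgraphs represented by vertices of the tree (D' \<sqsubseteq> D).\<close>
inductive subtree :: "'a sptree \<Rightarrow> 'a sptree \<Rightarrow> bool" where
  refl: "subtree T T"
| left: "subtree T' T1 \<Longrightarrow> subtree T' (Node c T1 T2)"
| right: "subtree T' T2 \<Longrightarrow> subtree T' (Node c T1 T2)"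

text \<open>Source-sink paths of the graph represented by a tree, as lists of arcs
  in traversal order.\<close>
inductive stpath :: "'a sptree \<Rightarrow> 'a list \<Rightarrow> bool" where
  arc: "stpath (Arc a) [a]"
| ser: "stpath T1 p \<Longrightarrow> stpath T2 q \<Longrightarrow> stpath (Node S T1 T2) (p @ q)"
| par1: "stpath T1 p \<Longrightarrow> stpath (Node P T1 T2) p"
| par2: "stpath T2 p \<Longrightarrow> stpath (Node P T1 T2) p"

definition path_profile :: "'a sptree \<Rightarrow> 'a list list \<Rightarrow> bool" where
  "path_profile T Ps \<longleftrightarrow> (\<forall>p \<in> set Ps. stpath T p) \<and>
     (\<forall>i < length Ps. \<forall>j < length Ps. i \<noteq> j \<longrightarrow> set (Ps ! i) \<inter> set (Ps ! j) = {})"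

definition plen :: "('a \<Rightarrow> real) \<Rightarrow> 'a list \<Rightarrow> 'a sptree \<Rightarrow> real" where
  "plen \<tau> p T = sum_list (map \<tau> (filter (\<lambda>a. a \<in> set (arcs T)) p))"

definition Cmax :: "('a \<Rightarrow> real) \<Rightarrow> 'a list list \<Rightarrow> 'a sptree \<Rightarrow> real" where
  "Cmax \<tau> Ps T = Max (insert 0 (set (map (\<lambda>p. plen \<tau> p T) Ps)))"

definition theta :: "('a \<Rightarrow> real) \<Rightarrow> 'a list list \<Rightarrow> 'a sptree \<Rightarrow> real" where
  "theta \<tau> Ps T = sum_list (map (\<lambda>p. plen \<tau> p T) Ps)"

definition npaths :: "'a list list \<Rightarrow> 'a sptree \<Rightarrow> nat" where
  "npaths Ps T = length (filter (\<lambda>p. set p \<inter> set (arcs T) \<noteq> {}) Ps)"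

definition optimal_profile :: "('a \<Rightarrow> real) \<Rightarrow> 'a sptree \<Rightarrow> nat \<Rightarrow> 'a list list \<Rightarrow> bool" where
  "optimal_profile \<tau> D k Ps \<longleftrightarrow> path_profile D Ps \<and> length Ps = k \<and>
     (\<forall>Qs. path_profile D Qs \<and> length Qs = k \<longrightarrow> Cmax \<tau> Ps D \<le> Cmax \<tau> Qs D)"

definition consistent :: "('a \<Rightarrow> real) \<Rightarrow> 'a list list \<Rightarrow> 'a list list \<Rightarrow> 'a sptree \<Rightarrow> bool" where
  "consistent \<tau> Ps Pstar T \<longleftrightarrow> npaths Ps T = npaths Pstar T \<and> theta \<tau> Ps T \<le> theta \<tau> Pstar T"

text \<open>The lengths of the paths traversing D' sorted non-increasingly
  are ps!0 \<ge> ps!1 \<ge> ...; the condition for i \<in> [k'-1] reads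
  (1/i) * (ps!0 + ... + ps!(i-1)) - ps!i \<le> C_max(Pstar, D').\<close>
definition balanced :: "('a \<Rightarrow> real) \<Rightarrow> 'a list list \<Rightarrow> 'a list list \<Rightarrow> 'a sptree \<Rightarrow> bool" where
  "balanced \<tau> Ps Pstar T \<longleftrightarrow>
     (let ps = rev (sort (map (\<lambda>p. plen \<tau> p T) (filter (\<lambda>p. set p \<inter> set (arcs T) \<noteq> {}) Ps)))
      in \<forall>i. 1 \<le> i \<and> i < length ps \<longrightarrow>
           (\<Sum>j<i. ps ! j) / real i - ps ! i \<le> Cmax \<tau> Pstar T)"

text \<open>Greedy composition (as a relation, since ties are broken arbitrarily).\<close>
definition greedy_comp :: "('a \<Rightarrow> real) \<Rightarrow> sptype \<Rightarrow> 'a sptree \<Rightarrow> 'a sptree \<Rightarrow>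
    'a list list \<Rightarrow> 'a list list \<Rightarrow> 'a list list \<Rightarrow> bool" where
  "greedy_comp \<tau> c T1 T2 Q R Ps \<longleftrightarrow>
     (if c = S then
        length Q = length R \<and>
        (\<exists>qs rs. mset qs = mset Q \<and> mset rs = mset R \<and>
           sorted_wrt (\<lambda>p q. plen \<tau> p T1 \<ge> plen \<tau> q T1) qs \<and>
           sorted_wrt (\<lambda>p q. plen \<tau> p T2 \<le> plen \<tau> q T2) rs \<and>
           Ps = map (\<lambda>(p, q). p @ q) (zip qs rs))
      else Ps = Q @ R)"

end

theory Submission
  imports Defs
begin

text \<open>
  Let \<open>C = C\<^sub>m\<^sub>a\<^sub>x(P*, D')\<close>; it dominates the corresponding values of both children.
  For path lengths \<open>p\<^sub>1 \<ge> p\<^sub>2 \<ge> \<dots>\<close> consider the excess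
  \<open>E(y) = \<Sum>\<^bsub>p\<^sub>j > y\<^esub> (p\<^sub>j - y - C)\<close>.
  Balance with slack \<open>C\<close> holds iff \<open>E(p\<^sub>i) \<le> 0\<close> for every \<open>i\<close>, and for a
  consistent profile, whose total length is at most \<open>C\<close> times the number of its paths,
  balance even gives \<open>E(y) \<le> 0\<close> for all \<open>y \<ge> 0\<close>.  Excess is additive over a union of
  profiles, which settles parallel composition.

  Series composition produces lengths \<open>a\<^sub>j + b\<^sub>j\<close> with \<open>a\<close> non-increasing and \<open>b\<close>
  non-decreasing.  At the threshold \<open>a\<^sub>t + b\<^sub>t\<close> the indices \<open>j < t\<close> have
  \<open>b\<^sub>j \<le> b\<^sub>t\<close>, so only the balance of \<open>a\<close> matters: the indices exceeding the
  threshold split into maximal blocks, each ending just below an index that does not exceed it,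
  and the average of such a block is controlled by the balance of \<open>a\<close> at the block's end,
  because a tail of a non-increasing sequence has at most the average of the whole.  The
  indices \<open>j > t\<close> are handled symmetrically with the reversed \<open>b\<close>.  Path counts and
  total lengths simply add, which gives consistency.
\<close>

section \<open>Balanced sequences and their excess\<close>

lemma sum_list_take_nth: "i \<le> length xs \<Longrightarrow> sum_list (take i xs) = (\<Sum>j<i. xs ! j)"
  by (simp add: sum_list_sum_nth atLeast0LessThan min_absorb1)

lemma sum_list_map2_plus:
  fixes xs ys :: "real list"
  shows "length xs = length ys \<Longrightarrow> sum_list (map2 (+) xs ys) = sum_list xs + sum_list ys"
  by (induction xs arbitrary: ys) (auto simp: Suc_length_conv)

lemma sorted_desc_take_drop:
  fixes ps :: "real list"
  assumes "sorted_wrt (\<ge>) ps" "i < length ps"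
  shows "\<forall>x\<in>set (take i ps). ps ! i \<le> x" and "\<forall>x\<in>set (drop i ps). x \<le> ps ! i"
proof -
  have "sorted_wrt (\<ge>) (take i ps @ ps ! i # drop (Suc i) ps)"
    using assms(1) by (subst (asm) id_take_nth_drop[OF assms(2)])
  then have "\<forall>x\<in>set (take i ps). ps ! i \<le> x" "\<forall>x\<in>set (drop (Suc i) ps). x \<le> ps ! i"
    by (auto simp: sorted_wrt_append)
  moreover have "drop i ps = ps ! i # drop (Suc i) ps"
    using assms(2) by (rule Cons_nth_drop_Suc[symmetric])
  ultimately show "\<forall>x\<in>set (take i ps). ps ! i \<le> x" "\<forall>x\<in>set (drop i ps). x \<le> ps ! i"
    by auto
qed

lemma sorted_desc_nth_antimono:
  fixes xs :: "real list"
  assumes "sorted_wrt (\<ge>) xs" "i \<le> j" "j < length xs"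
  shows "xs ! j \<le> xs ! i"
  using assms sorted_wrt_nth_less[OF assms(1), of i j] by (cases "i = j") auto

text \<open>For \<open>i \<ge> 1\<close> the condition below is the paper's \<open>(1/i) \<Sum>\<^bsub>j<i\<^esub> p\<^sub>j - p\<^sub>i \<le> C\<close>
  with the denominator cleared; for \<open>i = 0\<close> it holds trivially.\<close>

definition balanced_seq :: "real \<Rightarrow> real list \<Rightarrow> bool" where
  "balanced_seq C ps \<longleftrightarrow> (\<forall>i<length ps. sum_list (take i ps) \<le> real i * (ps ! i + C))"

lemma balanced_seq_nth:
  "balanced_seq C ps \<Longrightarrow> i < length ps \<Longrightarrow> (\<Sum>j<i. ps ! j) \<le> real i * (ps ! i + C)"
  unfolding balanced_seq_def by (simp flip: sum_list_take_nth)

lemma balanced_seq_mono: "balanced_seq C ps \<Longrightarrow> C \<le> C' \<Longrightarrow> balanced_seq C' ps"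
  unfolding balanced_seq_def by (meson add_left_mono mult_left_mono of_nat_0_le_iff order_trans)

definition excess :: "real \<Rightarrow> real \<Rightarrow> real list \<Rightarrow> real" where
  "excess C y xs = (\<Sum>x\<leftarrow>xs. if y < x then x - y - C else 0)"

lemma excess_Nil [simp]: "excess C y [] = 0"
  by (simp add: excess_def)

lemma excess_Cons [simp]: "excess C y (x # xs) = (if y < x then x - y - C else 0) + excess C y xs"
  by (simp add: excess_def)

lemma excess_append [simp]: "excess C y (xs @ ys) = excess C y xs + excess C y ys"
  by (simp add: excess_def)

lemma excess_mset: "mset xs = mset ys \<Longrightarrow> excess C y xs = excess C y ys"
  unfolding excess_def by (simp flip: sum_mset_sum_list)

lemma sum_list_minus_const: "(\<Sum>x\<leftarrow>xs. x - y - C) = sum_list xs - real (length xs) * (y + C)"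
  by (simp add: sum_list_subtractf sum_list_triv algebra_simps)

lemma excess_eq_if_all_greater:
  "\<forall>x\<in>set xs. y < x \<Longrightarrow> excess C y xs = sum_list xs - real (length xs) * (y + C)"
  unfolding excess_def sum_list_minus_const[symmetric] by (rule arg_cong[where f = sum_list]) simp

lemma excess_eq_0_if_all_le: "\<forall>x\<in>set xs. x \<le> y \<Longrightarrow> excess C y xs = 0"
  by (induction xs) auto

lemma excess_ge_if_all_ge:
  "0 \<le> C \<Longrightarrow> \<forall>x\<in>set xs. y \<le> x \<Longrightarrow> sum_list xs - real (length xs) * (y + C) \<le> excess C y xs"
  unfolding excess_def sum_list_minus_const[symmetric] by (rule sum_list_mono) auto

lemma excess_nonpos_if_balanced:
  assumes sorted: "sorted_wrt (\<ge>) ps" and bal: "balanced_seq C ps"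
    and "x \<in> set ps" "x \<le> y"
  shows "excess C y ps \<le> 0"
proof -
  define i where "i = length (takeWhile (\<lambda>x. y < x) ps)"
  have "dropWhile (\<lambda>x. y < x) ps \<noteq> []"
    using assms(3,4) by (fastforce simp: dropWhile_eq_Nil_conv not_less)
  moreover have "length ps = i + length (dropWhile (\<lambda>x. y < x) ps)"
    unfolding i_def by (simp flip: length_append)
  ultimately have i: "i < length ps" by simp
  have "ps ! i \<le> y"
    using nth_length_takeWhile[of "\<lambda>x. y < x" ps] i unfolding i_def by simp
  have take: "take i ps = takeWhile (\<lambda>x. y < x) ps"
    unfolding i_def by (rule takeWhile_eq_take[symmetric])
  have "excess C y ps = excess C y (take i ps) + excess C y (drop i ps)"
    by (metis excess_append append_take_drop_id)
  also have "excess C y (drop i ps) = 0"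
    using sorted_desc_take_drop(2)[OF sorted i] \<open>ps ! i \<le> y\<close> by (intro excess_eq_0_if_all_le) auto
  also have "excess C y (take i ps) = sum_list (take i ps) - real i * (y + C)"
    using i take by (subst excess_eq_if_all_greater) (auto simp flip: i_def dest: set_takeWhileD)
  also have "\<dots> \<le> sum_list (take i ps) - real i * (ps ! i + C)"
    using \<open>ps ! i \<le> y\<close> by (simp add: mult_left_mono)
  also have "\<dots> \<le> 0"
    using bal i unfolding balanced_seq_def by simp
  finally show ?thesis by simp
qed

lemma balanced_if_excess_nonpos:
  assumes sorted: "sorted_wrt (\<ge>) ps" and "0 \<le> C"
    and exc: "\<And>i. i < length ps \<Longrightarrow> excess C (ps ! i) ps \<le> 0"
  shows "balanced_seq C ps"
  unfolding balanced_seq_def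
proof (intro allI impI)
  fix i assume i: "i < length ps"
  have "sum_list (take i ps) - real i * (ps ! i + C) \<le> excess C (ps ! i) (take i ps)"
    using excess_ge_if_all_ge[OF \<open>0 \<le> C\<close> sorted_desc_take_drop(1)[OF sorted i]] i by simp
  also have "\<dots> = excess C (ps ! i) ps"
    using excess_eq_0_if_all_le[OF sorted_desc_take_drop(2)[OF sorted i]]
    by (metis excess_append append_take_drop_id add_0_right)
  also have "\<dots> \<le> 0" using exc[OF i] .
  finally show "sum_list (take i ps) \<le> real i * (ps ! i + C)" by simp
qed

lemma excess_nonpos_if_balanced_sum:
  assumes bal: "balanced_seq C (rev (sort xs))" and sum: "sum_list xs \<le> real (length xs) * C"
    and "0 \<le> y"
  shows "excess C y xs \<le> 0"
proof -
  have "excess C y xs = excess C y (rev (sort xs))" by (rule excess_mset) simp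
  also have "\<dots> \<le> 0"
  proof (cases "\<exists>x\<in>set xs. x \<le> y")
    case True
    then show ?thesis
      using excess_nonpos_if_balanced[OF _ bal] by (auto simp: sorted_wrt_rev)
  next
    case False
    have "sum_list (rev (sort xs)) = sum_list xs"
      by (simp flip: sum_mset_sum_list)
    with False have "excess C y (rev (sort xs)) = sum_list xs - real (length xs) * (y + C)"
      by (subst excess_eq_if_all_greater) auto
    also have "\<dots> \<le> 0"
      using sum mult_nonneg_nonneg[OF \<open>0 \<le> y\<close>, of "real (length xs)"] by (simp add: algebra_simps)
    finally show ?thesis .
  qed
  finally show ?thesis .
qed

lemma balanced_seq_append:
  assumes "0 \<le> C" and nonneg: "\<forall>x\<in>set (xs @ ys). 0 \<le> x"
    and "balanced_seq C (rev (sort xs))" "sum_list xs \<le> real (length xs) * C"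
    and "balanced_seq C (rev (sort ys))" "sum_list ys \<le> real (length ys) * C"
  shows "balanced_seq C (rev (sort (xs @ ys)))"
proof (rule balanced_if_excess_nonpos)
  fix i assume "i < length (rev (sort (xs @ ys)))"
  define y where "y = rev (sort (xs @ ys)) ! i"
  have "y \<in> set (rev (sort (xs @ ys)))"
    unfolding y_def using \<open>i < _\<close> by (rule nth_mem)
  then have "0 \<le> y" using nonneg by simp
  have "excess C y (rev (sort (xs @ ys))) = excess C y xs + excess C y ys"
    by (subst excess_mset[of _ "xs @ ys"]) simp_all
  also have "\<dots> \<le> 0"
    using excess_nonpos_if_balanced_sum[OF assms(3,4) \<open>0 \<le> y\<close>]
      excess_nonpos_if_balanced_sum[OF assms(5,6) \<open>0 \<le> y\<close>] by simp
  finally show "excess C (rev (sort (xs @ ys)) ! i) (rev (sort (xs @ ys))) \<le> 0"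
    unfolding y_def .
qed (simp_all add: sorted_wrt_rev \<open>0 \<le> C\<close>)

section \<open>Series composition of balanced sequences\<close>

lemma sum_upper_segment_le:
  fixes a :: "nat \<Rightarrow> real"
  assumes antimono: "\<And>i j. i \<le> j \<Longrightarrow> j \<le> t \<Longrightarrow> a j \<le> a i"
    and bal: "(\<Sum>j<t. a j) \<le> real t * (a t + C)" and "q \<le> t"
  shows "(\<Sum>j=q..<t. a j) \<le> real (t - q) * (a t + C)"
proof (cases "q = t")
  case False
  then have "q < t" using \<open>q \<le> t\<close> by simp
  define lo where "lo = (\<Sum>j<q. a j)"
  define hi where "hi = (\<Sum>j=q..<t. a j)"
  have lo: "real q * a q \<le> lo"
    unfolding lo_def using sum_bounded_below[of "{..<q}" "a q" a] antimono \<open>q < t\<close> by simp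
  have hi: "hi \<le> real (t - q) * a q"
    unfolding hi_def using sum_bounded_above[of "{q..<t}" a "a q"] antimono by simp
  have "lo + hi = (\<Sum>j<t. a j)"
    unfolding lo_def hi_def atLeast0LessThan[symmetric]
    using sum.atLeastLessThan_concat[of 0 q t a] \<open>q < t\<close> by simp
  then have whole: "lo + hi \<le> real t * (a t + C)" using bal by simp
  have "real t * hi = real q * hi + real (t - q) * hi"
    using \<open>q < t\<close> by (simp add: of_nat_diff algebra_simps)
  also have "\<dots> \<le> real (t - q) * lo + real (t - q) * hi"
    using mult_left_mono[OF hi, of "real q"] mult_left_mono[OF lo, of "real (t - q)"]
    by (simp add: algebra_simps)
  also have "\<dots> \<le> real (t - q) * (real t * (a t + C))"
    using mult_left_mono[OF whole, of "real (t - q)"] by (simp add: algebra_simps)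
  finally have "real t * hi \<le> real t * (real (t - q) * (a t + C))"
    by (simp add: algebra_simps)
  then show ?thesis
    using \<open>q < t\<close> unfolding hi_def by simp
qed simp

lemma excess_prefix_nonpos:
  fixes a b :: "nat \<Rightarrow> real"
  assumes "\<And>i j. i \<le> j \<Longrightarrow> j \<le> t \<Longrightarrow> a j \<le> a i"
    and "\<And>i j. i \<le> j \<Longrightarrow> j < t \<Longrightarrow> b i \<le> b j"
    and "\<And>i. i \<le> t \<Longrightarrow> (\<Sum>j<i. a j) \<le> real i * (a i + C)"
    and "\<And>j. j < t \<Longrightarrow> a t + b j \<le> y"
  shows "excess C y (map (\<lambda>j. a j + b j) [0..<t]) \<le> 0"
  using assms
proof (induction t rule: less_induct)
  case (less t)
  note a_antimono = less.prems(1) and b_mono = less.prems(2)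
    and a_bal = less.prems(3) and below = less.prems(4)
  have segment: "excess C y (map (\<lambda>j. a j + b j) [q..<t]) \<le> 0"
    if "q \<le> t" and above: "\<forall>j\<in>{q..<t}. y < a j + b j" for q
  proof -
    have "(\<Sum>j=q..<t. a j + b j) \<le> (\<Sum>j=q..<t. a j + (y - a t))"
      by (rule sum_mono) (use below in fastforce)
    then have sum_le: "(\<Sum>j=q..<t. a j + b j) \<le> (\<Sum>j=q..<t. a j) + real (t - q) * (y - a t)"
      by (simp add: sum.distrib)
    have "excess C y (map (\<lambda>j. a j + b j) [q..<t])
        = (\<Sum>j=q..<t. a j + b j) - real (t - q) * (y + C)"
      using above by (simp add: excess_eq_if_all_greater flip: sum_set_upt_conv_sum_list_nat)
    also have "\<dots> \<le> (\<Sum>j=q..<t. a j) - real (t - q) * (a t + C)"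
      using sum_le by (simp add: algebra_simps)
    also have "\<dots> \<le> 0"
      using sum_upper_segment_le[OF a_antimono a_bal[of t] \<open>q \<le> t\<close>] by simp
    finally show ?thesis .
  qed
  show ?case
  proof (cases "\<exists>q<t. a q + b q \<le> y")
    case False
    then show ?thesis using segment[of 0] by (simp add: not_le)
  next
    case True
    txt \<open>Below the last index \<open>q\<close> not exceeding the threshold, \<open>b\<^sub>j \<le> b\<^sub>q\<close> lets the
      induction hypothesis apply at \<open>q\<close>; the block above \<open>q\<close> lies entirely above it.\<close>
    define q where "q = (GREATEST q. q < t \<and> a q + b q \<le> y)"
    have q: "q < t" "a q + b q \<le> y"
      using GreatestI_ex_nat[of "\<lambda>q. q < t \<and> a q + b q \<le> y" t] True unfolding q_def by auto
    have above: "y < a j + b j" if "q < j" "j < t" for j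
      using Greatest_le_nat[of "\<lambda>q. q < t \<and> a q + b q \<le> y" j t] that unfolding q_def[symmetric]
      by (cases "a j + b j \<le> y") auto
    have split: "[0..<t] = [0..<q] @ q # [Suc q..<t]"
      using q(1) upt_add_eq_append[of 0 q "t - q"] by (simp add: upt_conv_Cons)
    have "excess C y (map (\<lambda>j. a j + b j) [0..<q]) \<le> 0"
    proof (rule less.IH[OF q(1)])
      show "b j \<le> b j'" if "j \<le> j'" "j' < q" for j j' using b_mono that q(1) by simp
      show "a q + b j \<le> y" if "j < q" for j using b_mono[of j q] that q by simp
    qed (use a_antimono a_bal q(1) in auto)
    moreover have "excess C y (map (\<lambda>j. a j + b j) [Suc q..<t]) \<le> 0"
      using q(1) above by (intro segment) auto
    ultimately show ?thesis using q(2) by (simp add: split)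
  qed
qed

lemma excess_suffix_nonpos:
  fixes a b :: "nat \<Rightarrow> real"
  assumes a_antimono: "\<And>i j. i \<le> j \<Longrightarrow> j < n \<Longrightarrow> a j \<le> a i"
    and b_mono: "\<And>i j. i \<le> j \<Longrightarrow> j < n \<Longrightarrow> b i \<le> b j"
    and b_bal: "\<And>i. i < n \<Longrightarrow> (\<Sum>j<i. b (n - 1 - j)) \<le> real i * (b (n - 1 - i) + C)"
    and "t < n"
  shows "excess C (a t + b t) (map (\<lambda>j. a j + b j) [Suc t..<n]) \<le> 0"
proof -
  define m where "m = n - 1 - t"
  have rev: "rev (map (\<lambda>j. a j + b j) [Suc t..<n]) = map (\<lambda>j. b (n - 1 - j) + a (n - 1 - j)) [0..<m]"
    by (rule nth_equalityI) (auto simp: m_def rev_nth Suc_diff_Suc)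
  have "excess C (a t + b t) (map (\<lambda>j. b (n - 1 - j) + a (n - 1 - j)) [0..<m]) \<le> 0"
  proof (rule excess_prefix_nonpos)
    show "b (n - 1 - m) + a (n - 1 - j) \<le> a t + b t" if "j < m" for j
      using a_antimono[of t "n - 1 - j"] that \<open>t < n\<close> by (simp add: m_def)
  qed (use a_antimono b_mono b_bal \<open>t < n\<close> in \<open>auto simp: m_def\<close>)
  then show ?thesis
    by (metis rev excess_mset mset_rev)
qed

lemma excess_series_nonpos:
  fixes a b :: "nat \<Rightarrow> real"
  assumes a_antimono: "\<And>i j. i \<le> j \<Longrightarrow> j < n \<Longrightarrow> a j \<le> a i"
    and b_mono: "\<And>i j. i \<le> j \<Longrightarrow> j < n \<Longrightarrow> b i \<le> b j"
    and a_bal: "\<And>i. i < n \<Longrightarrow> (\<Sum>j<i. a j) \<le> real i * (a i + C)"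
    and b_bal: "\<And>i. i < n \<Longrightarrow> (\<Sum>j<i. b (n - 1 - j)) \<le> real i * (b (n - 1 - i) + C)"
    and "t < n"
  shows "excess C (a t + b t) (map (\<lambda>j. a j + b j) [0..<n]) \<le> 0"
proof -
  have split: "[0..<n] = [0..<t] @ t # [Suc t..<n]"
    using \<open>t < n\<close> upt_add_eq_append[of 0 t "n - t"] by (simp add: upt_conv_Cons)
  have "excess C (a t + b t) (map (\<lambda>j. a j + b j) [0..<t]) \<le> 0"
    by (rule excess_prefix_nonpos) (use assms in auto)
  moreover have "excess C (a t + b t) (map (\<lambda>j. a j + b j) [Suc t..<n]) \<le> 0"
    using a_antimono b_mono b_bal \<open>t < n\<close> by (rule excess_suffix_nonpos)
  ultimately show ?thesis by (simp add: split)
qed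

lemma balanced_seq_map2_plus:
  assumes "0 \<le> C" and len: "length xs = length ys"
    and xs: "sorted_wrt (\<ge>) xs" "balanced_seq C xs"
    and ys: "sorted ys" "balanced_seq C (rev ys)"
  shows "balanced_seq C (rev (sort (map2 (+) xs ys)))"
proof (rule balanced_if_excess_nonpos)
  define n where "n = length xs"
  have zs: "map2 (+) xs ys = map (\<lambda>j. xs ! j + ys ! j) [0..<n]"
    using len by (intro nth_equalityI) (auto simp: n_def)
  fix i assume "i < length (rev (sort (map2 (+) xs ys)))"
  then have "rev (sort (map2 (+) xs ys)) ! i \<in> set (map (\<lambda>j. xs ! j + ys ! j) [0..<n])"
    by (metis nth_mem set_rev set_sort zs)
  then obtain t where "t < n" and t: "rev (sort (map2 (+) xs ys)) ! i = xs ! t + ys ! t"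
    by auto
  have "excess C (xs ! t + ys ! t) (map (\<lambda>j. xs ! j + ys ! j) [0..<n]) \<le> 0"
  proof (rule excess_series_nonpos[OF _ _ _ _ \<open>t < n\<close>])
    show "(\<Sum>j<k. ys ! (n - 1 - j)) \<le> real k * (ys ! (n - 1 - k) + C)" if "k < n" for k
      using balanced_seq_nth[OF ys(2), of k] that len by (simp add: n_def rev_nth)
  qed (use xs ys len sorted_desc_nth_antimono sorted_nth_mono balanced_seq_nth in \<open>auto simp: n_def\<close>)
  then show "excess C (rev (sort (map2 (+) xs ys)) ! i) (rev (sort (map2 (+) xs ys))) \<le> 0"
    unfolding t by (subst excess_mset[of _ "map2 (+) xs ys"]) (simp_all add: zs)
qed (simp_all add: sorted_wrt_rev \<open>0 \<le> C\<close>)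

section \<open>Paths through a subgraph of the decomposition tree\<close>

lemma stpath_nonempty: "stpath T p \<Longrightarrow> p \<noteq> []"
  by (induction rule: stpath.induct) auto

lemma set_stpath_subset: "stpath T p \<Longrightarrow> set p \<subseteq> set (arcs T)"
  by (induction rule: stpath.induct) auto

lemma stpath_touches:
  assumes "stpath T p" shows "set p \<inter> set (arcs T) \<noteq> {}"
  using stpath_nonempty[OF assms] set_stpath_subset[OF assms] by (simp add: Int_absorb2)

lemma filter_arcs_stpath:
  assumes "stpath T p" shows "filter (\<lambda>a. a \<in> set (arcs T)) p = p"
  using set_stpath_subset[OF assms] by (auto simp: filter_id_conv)

lemma subtree_arcs_subset: "subtree T' T \<Longrightarrow> set (arcs T') \<subseteq> set (arcs T)"
  by (induction rule: subtree.induct) auto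

lemma subtree_distinct_arcs: "subtree T' T \<Longrightarrow> distinct (arcs T) \<Longrightarrow> distinct (arcs T')"
  by (induction rule: subtree.induct) auto

lemma stpath_restrict_left:
  assumes "distinct (arcs (Node c T1 T2))" and "stpath (Node c T1 T2) p"
    and "set p \<inter> set (arcs T1) \<noteq> {}"
  shows "stpath T1 (filter (\<lambda>a. a \<in> set (arcs T1)) p)"
  using assms(2)
proof cases
  case (ser p1 p2)
  have "filter (\<lambda>a. a \<in> set (arcs T1)) p1 = p1"
    using ser(3) by (rule filter_arcs_stpath)
  moreover have "filter (\<lambda>a. a \<in> set (arcs T1)) p2 = []"
    using set_stpath_subset[OF ser(4)] assms(1) by (auto simp: filter_empty_conv)
  ultimately show ?thesis using ser by simp
next
  case par2
  then show ?thesis using assms(1,3) set_stpath_subset[OF par2(2)] by auto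
qed (simp add: filter_arcs_stpath)

lemma stpath_restrict_right:
  assumes "distinct (arcs (Node c T1 T2))" and "stpath (Node c T1 T2) p"
    and "set p \<inter> set (arcs T2) \<noteq> {}"
  shows "stpath T2 (filter (\<lambda>a. a \<in> set (arcs T2)) p)"
  using assms(2)
proof cases
  case (ser p1 p2)
  have "filter (\<lambda>a. a \<in> set (arcs T2)) p1 = []"
    using set_stpath_subset[OF ser(3)] assms(1) by (auto simp: filter_empty_conv)
  moreover have "filter (\<lambda>a. a \<in> set (arcs T2)) p2 = p2"
    using ser(4) by (rule filter_arcs_stpath)
  ultimately show ?thesis using ser by simp
next
  case par1
  then show ?thesis using assms(1,3) set_stpath_subset[OF par1(2)] by auto
qed (simp add: filter_arcs_stpath)

lemma stpath_restrict_subtree: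
  assumes "subtree N D" and "distinct (arcs D)" and "stpath D p"
    and "set p \<inter> set (arcs N) \<noteq> {}"
  shows "stpath N (filter (\<lambda>a. a \<in> set (arcs N)) p)"
  using assms
proof (induction arbitrary: p rule: subtree.induct)
  case (refl T)
  then show ?case by (simp add: filter_arcs_stpath)
next
  case (left N T1 c T2)
  let ?p1 = "filter (\<lambda>a. a \<in> set (arcs T1)) p"
  have N_T1: "set (arcs N) \<subseteq> set (arcs T1)" using left.hyps by (rule subtree_arcs_subset)
  have "stpath T1 ?p1"
    using stpath_restrict_left[OF left.prems(1,2)] left.prems(3) N_T1 by blast
  moreover have "set ?p1 \<inter> set (arcs N) \<noteq> {}" using left.prems(3) N_T1 by auto
  moreover have "filter (\<lambda>a. a \<in> set (arcs N)) ?p1 = filter (\<lambda>a. a \<in> set (arcs N)) p"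
    using N_T1 by (auto simp: filter_filter intro: filter_cong)
  ultimately show ?case using left.IH left.prems(1) by fastforce
next
  case (right N T2 c T1)
  let ?p2 = "filter (\<lambda>a. a \<in> set (arcs T2)) p"
  have N_T2: "set (arcs N) \<subseteq> set (arcs T2)" using right.hyps by (rule subtree_arcs_subset)
  have "stpath T2 ?p2"
    using stpath_restrict_right[OF right.prems(1,2)] right.prems(3) N_T2 by blast
  moreover have "set ?p2 \<inter> set (arcs N) \<noteq> {}" using right.prems(3) N_T2 by auto
  moreover have "filter (\<lambda>a. a \<in> set (arcs N)) ?p2 = filter (\<lambda>a. a \<in> set (arcs N)) p"
    using N_T2 by (auto simp: filter_filter intro: filter_cong)
  ultimately show ?case using right.IH right.prems(1) by fastforce
qed

lemma touches_Node_S_iff: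
  assumes "subtree (Node S T1 T2) D" and "distinct (arcs D)" and "stpath D p"
  shows "set p \<inter> set (arcs (Node S T1 T2)) \<noteq> {} \<longleftrightarrow> set p \<inter> set (arcs T1) \<noteq> {}"
proof
  assume "set p \<inter> set (arcs (Node S T1 T2)) \<noteq> {}"
  with assms have "stpath (Node S T1 T2) (filter (\<lambda>a. a \<in> set (arcs (Node S T1 T2))) p)"
    by (rule stpath_restrict_subtree)
  then obtain p1 p2 where "stpath T1 p1" and p1: "filter (\<lambda>a. a \<in> set (arcs (Node S T1 T2))) p = p1 @ p2"
    by cases auto
  from \<open>stpath T1 p1\<close> have "set p1 \<inter> set (arcs T1) \<noteq> {}" by (rule stpath_touches)
  moreover have "set p1 \<subseteq> set p" using arg_cong[OF p1, of set] by auto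
  ultimately show "set p \<inter> set (arcs T1) \<noteq> {}" by blast
qed auto

lemma not_touches_both_Node_P:
  assumes "subtree (Node P T1 T2) D" and "distinct (arcs D)" and "stpath D p"
  shows "\<not> (set p \<inter> set (arcs T1) \<noteq> {} \<and> set p \<inter> set (arcs T2) \<noteq> {})"
proof
  let ?q = "filter (\<lambda>a. a \<in> set (arcs (Node P T1 T2))) p"
  assume touches: "set p \<inter> set (arcs T1) \<noteq> {} \<and> set p \<inter> set (arcs T2) \<noteq> {}"
  then have "stpath (Node P T1 T2) ?q"
    using assms by (intro stpath_restrict_subtree) auto
  then have "set ?q \<subseteq> set (arcs T1) \<or> set ?q \<subseteq> set (arcs T2)"
    by cases (blast dest: set_stpath_subset)+
  moreover have "set (arcs T1) \<inter> set (arcs T2) = {}"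
    using subtree_distinct_arcs[OF assms(1,2)] by simp
  ultimately show False using touches by auto
qed

lemma length_filter_disj:
  "\<forall>x\<in>set xs. \<not> (f x \<and> g x) \<Longrightarrow>
    length (filter (\<lambda>x. f x \<or> g x) xs) = length (filter f xs) + length (filter g xs)"
  by (induction xs) auto

lemma npaths_Node_S:
  assumes "subtree (Node S T1 T2) D" and "distinct (arcs D)" and "\<forall>p\<in>set Ps. stpath D p"
  shows "npaths Ps (Node S T1 T2) = npaths Ps T1"
proof -
  have "filter (\<lambda>p. set p \<inter> set (arcs (Node S T1 T2)) \<noteq> {}) Ps
      = filter (\<lambda>p. set p \<inter> set (arcs T1) \<noteq> {}) Ps"
    using touches_Node_S_iff[OF assms(1,2)] assms(3) by (intro filter_cong) auto
  then show ?thesis by (simp add: npaths_def)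
qed

lemma npaths_Node_P:
  assumes "subtree (Node P T1 T2) D" and "distinct (arcs D)" and "\<forall>p\<in>set Ps. stpath D p"
  shows "npaths Ps (Node P T1 T2) = npaths Ps T1 + npaths Ps T2"
proof -
  have "npaths Ps (Node P T1 T2)
      = length (filter (\<lambda>p. set p \<inter> set (arcs T1) \<noteq> {} \<or> set p \<inter> set (arcs T2) \<noteq> {}) Ps)"
    unfolding npaths_def by (intro arg_cong[where f = length] filter_cong) auto
  also have "\<dots> = npaths Ps T1 + npaths Ps T2"
    unfolding npaths_def using not_touches_both_Node_P[OF assms(1,2)] assms(3)
    by (intro length_filter_disj) blast
  finally show ?thesis .
qed

section \<open>Path lengths and path profiles\<close>

lemma plen_cong:
  "(\<And>a. a \<in> set p \<Longrightarrow> a \<in> set (arcs T) \<longleftrightarrow> a \<in> set (arcs T')) \<Longrightarrow> plen \<tau> p T = plen \<tau> p T'"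
  unfolding plen_def by (metis filter_cong)

lemma plen_append: "plen \<tau> (p @ q) T = plen \<tau> p T + plen \<tau> q T"
  by (simp add: plen_def)

lemma plen_nonneg: "\<forall>a. 0 \<le> \<tau> a \<Longrightarrow> 0 \<le> plen \<tau> p T"
  unfolding plen_def by (rule sum_list_nonneg) auto

lemma plen_Node:
  "set (arcs T1) \<inter> set (arcs T2) = {} \<Longrightarrow> plen \<tau> p (Node c T1 T2) = plen \<tau> p T1 + plen \<tau> p T2"
  by (induction p) (auto simp: plen_def)

lemma plen_Node_left:
  "set (arcs T1) \<inter> set (arcs T2) = {} \<Longrightarrow> set p \<subseteq> set (arcs T1) \<Longrightarrow>
    plen \<tau> p (Node c T1 T2) = plen \<tau> p T1"
  by (rule plen_cong) auto

lemma plen_Node_right: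
  "set (arcs T1) \<inter> set (arcs T2) = {} \<Longrightarrow> set p \<subseteq> set (arcs T2) \<Longrightarrow>
    plen \<tau> p (Node c T1 T2) = plen \<tau> p T2"
  by (rule plen_cong) auto

lemma plen_map2_append:
  assumes "set (arcs T1) \<inter> set (arcs T2) = {}"
    and "\<forall>q\<in>set qs. set q \<subseteq> set (arcs T1)" and "\<forall>r\<in>set rs. set r \<subseteq> set (arcs T2)"
  shows "map (\<lambda>p. plen \<tau> p (Node c T1 T2)) (map2 (@) qs rs)
    = map2 (+) (map (\<lambda>p. plen \<tau> p T1) qs) (map (\<lambda>p. plen \<tau> p T2) rs)"
proof -
  have "set q \<subseteq> set (arcs T1) \<and> set r \<subseteq> set (arcs T2)" if "(q, r) \<in> set (zip qs rs)" for q r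
    using assms(2,3) set_zip_leftD[OF that] set_zip_rightD[OF that] by blast
  then show ?thesis
    unfolding zip_map1 zip_map2 map_map
    using assms(1) by (auto simp: plen_append plen_Node_left plen_Node_right intro!: map_cong)
qed

lemma Cmax_nonneg: "0 \<le> Cmax \<tau> Ps T"
  unfolding Cmax_def by (rule Max_ge) auto

lemma plen_le_Cmax: "p \<in> set Ps \<Longrightarrow> plen \<tau> p T \<le> Cmax \<tau> Ps T"
  unfolding Cmax_def by (rule Max_ge) auto

lemma Cmax_mono:
  assumes "\<And>p. p \<in> set Ps \<Longrightarrow> plen \<tau> p T \<le> plen \<tau> p T'"
  shows "Cmax \<tau> Ps T \<le> Cmax \<tau> Ps T'"
  unfolding Cmax_def[of \<tau> Ps T]
proof (rule Max.boundedI)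
  fix x assume "x \<in> insert 0 (set (map (\<lambda>p. plen \<tau> p T) Ps))"
  then show "x \<le> Cmax \<tau> Ps T'"
    using Cmax_nonneg assms plen_le_Cmax[of _ Ps \<tau> T'] by (force intro: order_trans)
qed auto

lemma Cmax_le_Node:
  assumes "\<forall>a. 0 \<le> \<tau> a" and "set (arcs T1) \<inter> set (arcs T2) = {}"
  shows "Cmax \<tau> Ps T1 \<le> Cmax \<tau> Ps (Node c T1 T2)" and "Cmax \<tau> Ps T2 \<le> Cmax \<tau> Ps (Node c T1 T2)"
  using assms by (auto intro!: Cmax_mono simp: plen_Node plen_nonneg)

lemma theta_mset: "mset Ps = mset Qs \<Longrightarrow> theta \<tau> Ps T = theta \<tau> Qs T"
  unfolding theta_def by (simp flip: sum_mset_sum_list)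

lemma theta_Node:
  "set (arcs T1) \<inter> set (arcs T2) = {} \<Longrightarrow> theta \<tau> Ps (Node c T1 T2) = theta \<tau> Ps T1 + theta \<tau> Ps T2"
  by (simp add: theta_def plen_Node sum_list_addf)

lemma theta_le_npaths_Cmax: "theta \<tau> Ps T \<le> real (npaths Ps T) * Cmax \<tau> Ps T"
proof -
  let ?touching = "filter (\<lambda>p. set p \<inter> set (arcs T) \<noteq> {}) Ps"
  have "theta \<tau> Ps T = (\<Sum>p\<leftarrow>?touching. plen \<tau> p T)"
    unfolding theta_def by (rule sum_list_map_filter[symmetric]) (auto simp: plen_def disjoint_iff)
  also have "\<dots> \<le> (\<Sum>p\<leftarrow>?touching. Cmax \<tau> Ps T)"
    by (rule sum_list_mono) (simp add: plen_le_Cmax)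
  also have "\<dots> = real (npaths Ps T) * Cmax \<tau> Ps T"
    by (simp add: npaths_def sum_list_triv)
  finally show ?thesis .
qed

lemma filter_touching_stpaths:
  "\<forall>p\<in>set Ps. stpath T p \<Longrightarrow> filter (\<lambda>p. set p \<inter> set (arcs T) \<noteq> {}) Ps = Ps"
  by (simp add: stpath_touches)

lemma npaths_stpaths: "\<forall>p\<in>set Ps. stpath T p \<Longrightarrow> npaths Ps T = length Ps"
  by (simp add: npaths_def filter_touching_stpaths)

lemma theta_le_if_consistent:
  assumes "path_profile T Q" and "consistent \<tau> Q Pstar T" and "Cmax \<tau> Pstar T \<le> C"
  shows "theta \<tau> Q T \<le> real (length Q) * C"
proof -
  have "theta \<tau> Q T \<le> theta \<tau> Pstar T"
    using assms(2) by (simp add: consistent_def)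
  also have "\<dots> \<le> real (npaths Pstar T) * Cmax \<tau> Pstar T"
    by (rule theta_le_npaths_Cmax)
  also have "npaths Pstar T = length Q"
    using assms(1,2) by (simp add: consistent_def npaths_stpaths path_profile_def)
  also have "real (length Q) * Cmax \<tau> Pstar T \<le> real (length Q) * C"
    using assms(3) by (simp add: mult_left_mono)
  finally show ?thesis .
qed

lemma balanced_iff_balanced_seq:
  assumes "\<forall>p\<in>set Ps. stpath T p"
  shows "balanced \<tau> Ps Pstar T \<longleftrightarrow>
    balanced_seq (Cmax \<tau> Pstar T) (rev (sort (map (\<lambda>p. plen \<tau> p T) Ps)))"
proof -
  have avg: "(1 \<le> i \<longrightarrow> (\<Sum>j<i. ps ! j) / real i - ps ! i \<le> C)
      \<longleftrightarrow> sum_list (take i ps) \<le> real i * (ps ! i + C)"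
    if "i < length ps" for i C and ps :: "real list"
    using that by (cases "i = 0") (simp_all add: sum_list_take_nth pos_divide_le_eq algebra_simps)
  show ?thesis
    unfolding balanced_def Let_def balanced_seq_def filter_touching_stpaths[OF assms]
    using avg by blast
qed

lemma balanced_seq_lengths:
  assumes "path_profile T Q" and "balanced \<tau> Q Pstar T" and "Cmax \<tau> Pstar T \<le> C"
  shows "balanced_seq C (rev (sort (map (\<lambda>p. plen \<tau> p T) Q)))"
proof -
  have "\<forall>p\<in>set Q. stpath T p" using assms(1) by (simp add: path_profile_def)
  then show ?thesis
    using assms(2,3) balanced_seq_mono by (auto simp: balanced_iff_balanced_seq)
qed

lemma balanced_seq_sorted_lengths:
  assumes "path_profile T Q" and "balanced \<tau> Q Pstar T" and "Cmax \<tau> Pstar T \<le> C"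
    and "mset qs = mset Q" and "sorted_wrt (\<lambda>p q. plen \<tau> q T \<le> plen \<tau> p T) qs"
  shows "balanced_seq C (map (\<lambda>p. plen \<tau> p T) qs)"
proof -
  have "sort (map (\<lambda>p. plen \<tau> p T) Q) = rev (map (\<lambda>p. plen \<tau> p T) qs)"
    by (rule properties_for_sort)
      (use assms(4,5) in \<open>simp_all add: sorted_wrt_rev sorted_wrt_map mset_map\<close>)
  then show ?thesis using balanced_seq_lengths[OF assms(1-3)] by simp
qed

lemma path_profile_iff:
  "path_profile T Ps \<longleftrightarrow> (\<forall>p\<in>set Ps. stpath T p) \<and> distinct Ps \<and>
     (\<forall>p\<in>set Ps. \<forall>q\<in>set Ps. p \<noteq> q \<longrightarrow> set p \<inter> set q = {})"
proof
  assume pp: "path_profile T Ps"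
  then have disj: "set (Ps ! i) \<inter> set (Ps ! j) = {}" if "i < length Ps" "j < length Ps" "i \<noteq> j" for i j
    using that unfolding path_profile_def by blast
  have "distinct Ps"
    unfolding distinct_conv_nth
    using disj pp stpath_nonempty unfolding path_profile_def by (metis Int_absorb nth_mem set_empty)
  moreover have "set p \<inter> set q = {}" if "p \<in> set Ps" "q \<in> set Ps" "p \<noteq> q" for p q
    using that disj by (metis in_set_conv_nth)
  ultimately show "(\<forall>p\<in>set Ps. stpath T p) \<and> distinct Ps \<and>
     (\<forall>p\<in>set Ps. \<forall>q\<in>set Ps. p \<noteq> q \<longrightarrow> set p \<inter> set q = {})"
    using pp unfolding path_profile_def by blast
next
  assume "(\<forall>p\<in>set Ps. stpath T p) \<and> distinct Ps \<and>
     (\<forall>p\<in>set Ps. \<forall>q\<in>set Ps. p \<noteq> q \<longrightarrow> set p \<inter> set q = {})"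
  then show "path_profile T Ps"
    unfolding path_profile_def by (metis nth_eq_iff_index_eq nth_mem)
qed

lemma path_profile_mset:
  "path_profile T Ps \<Longrightarrow> mset Qs = mset Ps \<Longrightarrow> path_profile T Qs"
  unfolding path_profile_iff by (metis mset_eq_setD mset_eq_imp_distinct_iff)

lemma path_profile_Node_S:
  assumes qs: "path_profile T1 qs" and rs: "path_profile T2 rs" and "length qs = length rs"
    and dis: "set (arcs T1) \<inter> set (arcs T2) = {}"
  shows "path_profile (Node S T1 T2) (map2 (@) qs rs)"
  unfolding path_profile_def
proof (intro conjI ballI allI impI)
  fix p assume "p \<in> set (map2 (@) qs rs)"
  then obtain q r where "q \<in> set qs" "r \<in> set rs" "p = q @ r"
    by (auto dest: set_zip_leftD set_zip_rightD)
  then show "stpath (Node S T1 T2) p"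
    using qs rs unfolding path_profile_def by (auto intro: stpath.ser)
next
  fix i j assume "i < length (map2 (@) qs rs)" "j < length (map2 (@) qs rs)" "i \<noteq> j"
  then have ij: "i < length qs" "j < length qs" "i < length rs" "j < length rs" by auto
  have "set (qs ! i) \<inter> set (qs ! j) = {}" "set (rs ! i) \<inter> set (rs ! j) = {}"
    using ij \<open>i \<noteq> j\<close> qs rs unfolding path_profile_def by blast+
  moreover have "set (qs ! i) \<inter> set (rs ! j) = {}" "set (rs ! i) \<inter> set (qs ! j) = {}"
    using ij qs rs dis set_stpath_subset unfolding path_profile_def by (meson disjoint_iff nth_mem subsetD)+
  ultimately show "set (map2 (@) qs rs ! i) \<inter> set (map2 (@) qs rs ! j) = {}"
    using ij by auto
qed

lemma path_profile_Node_P: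
  assumes Q: "path_profile T1 Q" and R: "path_profile T2 R"
    and dis: "set (arcs T1) \<inter> set (arcs T2) = {}"
  shows "path_profile (Node P T1 T2) (Q @ R)"
proof -
  have sub: "set p \<subseteq> set (arcs T1)" if "p \<in> set Q" for p
    using that Q set_stpath_subset unfolding path_profile_def by blast
  have sub': "set p \<subseteq> set (arcs T2)" if "p \<in> set R" for p
    using that R set_stpath_subset unfolding path_profile_def by blast
  have "set p \<inter> set q = {}" if "p \<in> set Q" "q \<in> set R" for p q
    using sub[OF that(1)] sub'[OF that(2)] dis by blast
  moreover have "set Q \<inter> set R = {}"
    using calculation Q stpath_nonempty unfolding path_profile_def by fastforce
  ultimately show ?thesis
    using Q R unfolding path_profile_iff by (auto intro: stpath.par1 stpath.par2; blast)
qed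

section \<open>Greedy composition\<close>

lemma greedy_series_composition:
  assumes dis: "set (arcs T1) \<inter> set (arcs T2) = {}" and \<tau>: "\<forall>a. 0 \<le> \<tau> a"
    and Q: "path_profile T1 Q" "consistent \<tau> Q Pstar T1" "balanced \<tau> Q Pstar T1"
    and R: "path_profile T2 R" "consistent \<tau> R Pstar T2" "balanced \<tau> R Pstar T2"
    and npaths: "npaths Pstar (Node S T1 T2) = npaths Pstar T1"
    and greedy: "greedy_comp \<tau> S T1 T2 Q R Ps"
  shows "path_profile (Node S T1 T2) Ps \<and> consistent \<tau> Ps Pstar (Node S T1 T2)
    \<and> balanced \<tau> Ps Pstar (Node S T1 T2)"
proof (intro conjI)
  let ?N = "Node S T1 T2"
  obtain qs rs where len: "length Q = length R" and mq: "mset qs = mset Q" and mr: "mset rs = mset R"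
    and sq: "sorted_wrt (\<lambda>p q. plen \<tau> q T1 \<le> plen \<tau> p T1) qs"
    and sr: "sorted_wrt (\<lambda>p q. plen \<tau> p T2 \<le> plen \<tau> q T2) rs"
    and Ps: "Ps = map2 (@) qs rs"
    using greedy unfolding greedy_comp_def by auto
  have qs: "path_profile T1 qs" and rs: "path_profile T2 rs"
    using path_profile_mset Q(1) R(1) mq mr by blast+
  have len_qs: "length qs = length Q" and len_rs: "length rs = length Q"
    using len mq mr by (metis size_mset)+
  show pp: "path_profile ?N Ps"
    unfolding Ps using qs rs len_qs len_rs dis by (intro path_profile_Node_S) auto
  have stpaths: "\<forall>p\<in>set qs. stpath T1 p" "\<forall>p\<in>set rs. stpath T2 p" "\<forall>p\<in>set Ps. stpath ?N p"
    using qs rs pp unfolding path_profile_def by blast+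
  have lengths: "map (\<lambda>p. plen \<tau> p ?N) Ps
      = map2 (+) (map (\<lambda>p. plen \<tau> p T1) qs) (map (\<lambda>p. plen \<tau> p T2) rs)"
    unfolding Ps using dis stpaths(1,2) by (intro plen_map2_append) (simp_all add: set_stpath_subset)
  have "npaths Ps ?N = npaths Pstar ?N"
    using stpaths Q(1,2) len_qs len_rs npaths
    by (simp add: Ps npaths_stpaths consistent_def path_profile_def)
  moreover have "theta \<tau> Ps ?N = theta \<tau> Q T1 + theta \<tau> R T2"
    using len_qs len_rs theta_mset[OF mq] theta_mset[OF mr]
    by (simp add: theta_def lengths sum_list_map2_plus)
  ultimately show "consistent \<tau> Ps Pstar ?N"
    using Q(2) R(2) by (simp add: consistent_def theta_Node[OF dis])
  define C where "C = Cmax \<tau> Pstar ?N"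
  have C: "Cmax \<tau> Pstar T1 \<le> C" "Cmax \<tau> Pstar T2 \<le> C" "0 \<le> C"
    using Cmax_le_Node[OF \<tau> dis] Cmax_nonneg unfolding C_def by blast+
  have "balanced_seq C (map (\<lambda>p. plen \<tau> p T1) qs)"
    by (rule balanced_seq_sorted_lengths[OF Q(1,3) C(1) mq sq])
  moreover have "balanced_seq C (map (\<lambda>p. plen \<tau> p T2) (rev rs))"
    using balanced_seq_sorted_lengths[OF R(1,3) C(2), of "rev rs"] mr sr by (simp add: sorted_wrt_rev)
  ultimately have "balanced_seq C (rev (sort (map (\<lambda>p. plen \<tau> p ?N) Ps)))"
    unfolding lengths using len_qs len_rs sq sr C(3)
    by (intro balanced_seq_map2_plus) (auto simp: sorted_wrt_map rev_map sorted_wrt_rev)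
  then show "balanced \<tau> Ps Pstar ?N"
    using balanced_iff_balanced_seq[OF stpaths(3)] by (simp add: C_def)
qed

lemma greedy_parallel_composition:
  assumes dis: "set (arcs T1) \<inter> set (arcs T2) = {}" and \<tau>: "\<forall>a. 0 \<le> \<tau> a"
    and Q: "path_profile T1 Q" "consistent \<tau> Q Pstar T1" "balanced \<tau> Q Pstar T1"
    and R: "path_profile T2 R" "consistent \<tau> R Pstar T2" "balanced \<tau> R Pstar T2"
    and npaths: "npaths Pstar (Node P T1 T2) = npaths Pstar T1 + npaths Pstar T2"
    and greedy: "greedy_comp \<tau> P T1 T2 Q R Ps"
  shows "path_profile (Node P T1 T2) Ps \<and> consistent \<tau> Ps Pstar (Node P T1 T2)
    \<and> balanced \<tau> Ps Pstar (Node P T1 T2)"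
proof (intro conjI)
  let ?N = "Node P T1 T2"
  have Ps: "Ps = Q @ R" using greedy by (simp add: greedy_comp_def)
  show pp: "path_profile ?N Ps"
    unfolding Ps using Q(1) R(1) dis by (rule path_profile_Node_P)
  have stpaths: "\<forall>p\<in>set Q. stpath T1 p" "\<forall>p\<in>set R. stpath T2 p" "\<forall>p\<in>set Ps. stpath ?N p"
    using Q(1) R(1) pp unfolding path_profile_def by blast+
  have lengths: "map (\<lambda>p. plen \<tau> p ?N) Ps = map (\<lambda>p. plen \<tau> p T1) Q @ map (\<lambda>p. plen \<tau> p T2) R"
    unfolding Ps using dis stpaths(1,2) by (simp add: set_stpath_subset plen_Node_left plen_Node_right)
  have "npaths Ps ?N = npaths Pstar ?N"
    using stpaths Q(2) R(2) npaths by (simp add: Ps npaths_stpaths consistent_def)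
  moreover have "theta \<tau> Ps ?N = theta \<tau> Q T1 + theta \<tau> R T2"
    by (simp add: theta_def lengths)
  ultimately show "consistent \<tau> Ps Pstar ?N"
    using Q(2) R(2) by (simp add: consistent_def theta_Node[OF dis])
  define C where "C = Cmax \<tau> Pstar ?N"
  have C: "Cmax \<tau> Pstar T1 \<le> C" "Cmax \<tau> Pstar T2 \<le> C" "0 \<le> C"
    using Cmax_le_Node[OF \<tau> dis] Cmax_nonneg unfolding C_def by blast+
  have "balanced_seq C (rev (sort (map (\<lambda>p. plen \<tau> p ?N) Ps)))"
    unfolding lengths
    using balanced_seq_lengths[OF Q(1,3) C(1)] theta_le_if_consistent[OF Q(1,2) C(1)]
      balanced_seq_lengths[OF R(1,3) C(2)] theta_le_if_consistent[OF R(1,2) C(2)]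
    by (intro balanced_seq_append) (auto simp: C(3) plen_nonneg[OF \<tau>] theta_def)
  then show "balanced \<tau> Ps Pstar ?N"
    using balanced_iff_balanced_seq[OF stpaths(3)] by (simp add: C_def)
qed

theorem lemma7:
  fixes \<tau> :: "'a \<Rightarrow> real" and D T1 T2 :: "'a sptree" and c :: sptype
    and k :: nat and Pstar Q R Ps :: "'a list list"
  assumes "wf_tree D"
    and "\<forall>a. \<tau> a \<ge> 0"
    and "optimal_profile \<tau> D k Pstar"
    and "subtree (Node c T1 T2) D"
    and "path_profile T1 Q" and "consistent \<tau> Q Pstar T1" and "balanced \<tau> Q Pstar T1"
    and "path_profile T2 R" and "consistent \<tau> R Pstar T2" and "balanced \<tau> R Pstar T2"
    and "greedy_comp \<tau> c T1 T2 Q R Ps"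
  shows "path_profile (Node c T1 T2) Ps \<and> consistent \<tau> Ps Pstar (Node c T1 T2)
         \<and> balanced \<tau> Ps Pstar (Node c T1 T2)"
proof -
  have distinct: "distinct (arcs D)" using assms(1) by (simp add: wf_tree_def)
  have dis: "set (arcs T1) \<inter> set (arcs T2) = {}"
    using subtree_distinct_arcs[OF assms(4) distinct] by simp
  have Pstar: "\<forall>p\<in>set Pstar. stpath D p"
    using assms(3) by (simp add: optimal_profile_def path_profile_def)
  show ?thesis
  proof (cases c)
    case S
    have "npaths Pstar (Node S T1 T2) = npaths Pstar T1"
      using assms(4) S by (intro npaths_Node_S[OF _ distinct Pstar]) simp
    moreover have "greedy_comp \<tau> S T1 T2 Q R Ps" using assms(11) S by simp
    ultimately show ?thesis
      using greedy_series_composition[OF dis assms(2,5-10)] S by simp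
  next
    case P
    have "npaths Pstar (Node P T1 T2) = npaths Pstar T1 + npaths Pstar T2"
      using assms(4) P by (intro npaths_Node_P[OF _ distinct Pstar]) simp
    moreover have "greedy_comp \<tau> P T1 T2 Q R Ps" using assms(11) P by simp
    ultimately show ?thesis
      using greedy_parallel_composition[OF dis assms(2,5-10)] P by simp
  qed
qed

end
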